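(* Let $\mathcal{H}$ be a real Hilbert space, let $A\colon \mathcal{H}\rightrightarrows\mathcal{H}$ be maximally monotone and let $B\colon \mathcal{H}\to\mathcal{H}$ be monotone with $(A+B)^{-1}(0)\neq\varnothing$. Suppose $\alpha\in[0,1/3)$, $\lambda>0$, and either (a) $B$ is $L$-Lipschitz and $\lambda < \frac{1-3\alpha}{2L}$, or (b) $B$ is $(1/L)$-cocoercive and $\lambda < \frac{1+\alpha}{2L}$. Given $x_0,x_{-1}\in\mathcal{H}$, define the sequence $(x_k)$ by $$x_{k+1} := J_{\lambda A}\bigl( x_k - 2\lambda B(x_k) +\lambda B(x_{k-1}) + \alpha(x_k-x_{k-1}) \bigr)\quad\forall k\in\mathbb{N}.$$ Then $(x_k)$ converges weakly to a point contained in $(A+B)^{-1}(0)$.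
   Context: $J_{\lambda A}:=(I+\lambda A)^{-1}$ is the resolvent. $B$ is $1/L$-cocoercive if $\langle x-y,B(x)-B(y)\rangle\geq\frac1L\|B(x)-B(y)\|^2$ for all $x,y$. *)

theory Defs
  imports "HOL-Analysis.Analysis"
begin

definition monotone_op :: "('a::real_inner \<Rightarrow> 'a set) \<Rightarrow> bool" where
  "monotone_op A \<longleftrightarrow>
     (\<forall>x y u v. u \<in> A x \<longrightarrow> v \<in> A y \<longrightarrow> inner (x - y) (u - v) \<ge> 0)"

definition max_monotone_op :: "('a::real_inner \<Rightarrow> 'a set) \<Rightarrow> bool" where
  "max_monotone_op A \<longleftrightarrow> monotone_op A \<and>
     (\<forall>A'. monotone_op A' \<and> (\<forall>x. A x \<subseteq> A' x) \<longrightarrow> A' = A)"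

definition monotone_fun :: "('a::real_inner \<Rightarrow> 'a) \<Rightarrow> bool" where
  "monotone_fun B \<longleftrightarrow> (\<forall>x y. inner (x - y) (B x - B y) \<ge> 0)"

definition cocoercive :: "real \<Rightarrow> ('a::real_inner \<Rightarrow> 'a) \<Rightarrow> bool" where
  "cocoercive L B \<longleftrightarrow> (\<forall>x y. inner (x - y) (B x - B y) \<ge> (1 / L) * (norm (B x - B y))\<^sup>2)"

text \<open>Resolvent J_{lam A} = (I + lam A)^{-1}, as a set-valued map.\<close>
definition resolvent :: "real \<Rightarrow> ('a::real_vector \<Rightarrow> 'a set) \<Rightarrow> 'a \<Rightarrow> 'a set" where
  "resolvent lam A z = {p. \<exists>u \<in> A p. z = p + lam *\<^sub>R u}"

definition zeros_sum :: "('a::real_vector \<Rightarrow> 'a set) \<Rightarrow> ('a \<Rightarrow> 'a) \<Rightarrow> 'a set" where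
  "zeros_sum A B = {z. \<exists>u \<in> A z. u + B z = 0}"

definition weakly_converges :: "(nat \<Rightarrow> 'a::real_inner) \<Rightarrow> 'a \<Rightarrow> bool" where
  "weakly_converges x p \<longleftrightarrow> (\<forall>y. ((\<lambda>k. inner (x k) y) \<longlongrightarrow> inner p y) sequentially)"

end

theory Submission
  imports Defs "HOL-Library.Diagonal_Subsequence"
begin

text \<open>
  Fix a zero \<open>z\<close> of \<open>A + B\<close> and let \<open>\<kappa>\<close> be a Lipschitz constant of \<open>\<alpha>I - \<lambda>B\<close>; each of the two
  step-size conditions yields such a \<open>\<kappa>\<close> with \<open>\<alpha> \<le> \<kappa>\<close> and \<open>\<alpha> + 2\<kappa> < 1\<close>. Monotonicity of
  \<open>A\<close> and \<open>B\<close> at the resolvent step shows that the energy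
  \<open>E\<^sub>k = \<parallel>x\<^sub>k\<^sub>+\<^sub>1 - z\<parallel>\<^sup>2 - \<alpha>\<parallel>x\<^sub>k - z\<parallel>\<^sup>2 - 2\<lambda>\<langle>x\<^sub>k\<^sub>+\<^sub>1 - z, Bx\<^sub>k\<^sub>+\<^sub>1 - Bx\<^sub>k\<rangle> + (\<alpha> + \<kappa>)\<parallel>x\<^sub>k\<^sub>+\<^sub>1 - x\<^sub>k\<parallel>\<^sup>2\<close>
  decreases by \<open>(1 - \<alpha> - 2\<kappa>)\<parallel>x\<^sub>k\<^sub>+\<^sub>2 - x\<^sub>k\<^sub>+\<^sub>1\<parallel>\<^sup>2\<close> and is bounded below. Hence the
  successive differences are square-summable, the distances \<open>\<parallel>x\<^sub>k - z\<parallel>\<^sup>2\<close> obey a damped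
  recurrence whose forcing term converges, so they converge, and every weak cluster point is a
  zero because the graph of \<open>A + B\<close> is closed for weak-strong limits. Opial's lemma then yields
  weak convergence of the whole sequence.
\<close>

section \<open>Weak convergence in Hilbert spaces\<close>

lemma linear_coeff_zero_if_quadratic_nonneg:
  fixes g q :: real
  assumes "0 \<le> q" and "\<And>t. 0 \<le> t * (2 * g + t * q)"
  shows "g = 0"
proof (rule ccontr)
  assume "g \<noteq> 0"
  define t where "t = - g / (q + 1)"
  have "t * (2 * g + t * q) = - (g\<^sup>2 / (q + 1)) * (1 + 1 / (q + 1))"
    using assms(1) by (simp add: t_def field_simps power2_eq_square)
  moreover have "0 < g\<^sup>2 / (q + 1) * (1 + 1 / (q + 1))"
    using \<open>g \<noteq> 0\<close> assms(1) by (simp add: add_pos_nonneg)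
  ultimately show False
    using assms(2)[of t] by linarith
qed

lemma Cauchy_if_dist_sq_le_vanishing:
  fixes m :: "nat \<Rightarrow> 'a::metric_space"
  assumes dist_le: "\<And>i j. (dist (m i) (m j))\<^sup>2 \<le> c i + c j" and "c \<longlonglongrightarrow> 0"
  shows "Cauchy m"
proof (rule metric_CauchyI)
  fix e :: real
  assume "0 < e"
  then obtain N where N: "\<And>n. N \<le> n \<Longrightarrow> \<bar>c n\<bar> < e\<^sup>2 / 2"
    using LIMSEQ_D[OF \<open>c \<longlonglongrightarrow> 0\<close>, of "e\<^sup>2 / 2"] by auto
  have "dist (m i) (m j) < e" if "N \<le> i" "N \<le> j" for i j
  proof -
    have "(dist (m i) (m j))\<^sup>2 < e\<^sup>2"
      using dist_le[of i j] N[OF that(1)] N[OF that(2)] by linarith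
    then show ?thesis
      using \<open>0 < e\<close> by (simp add: power_less_imp_less_base)
  qed
  then show "\<exists>N. \<forall>i\<ge>N. \<forall>j\<ge>N. dist (m i) (m j) < e"
    by blast
qed

lemma minimizing_sequence_exists:
  fixes \<Phi> :: "'a \<Rightarrow> real"
  assumes "S \<noteq> {}" and "bdd_below (\<Phi> ` S)"
  obtains m where "\<And>n. m n \<in> S" and "(\<lambda>n. \<Phi> (m n)) \<longlonglongrightarrow> Inf (\<Phi> ` S)"
proof -
  have "\<exists>y\<in>S. \<Phi> y < Inf (\<Phi> ` S) + 1 / Suc n" for n
    using cInf_lessD[of "\<Phi> ` S" "Inf (\<Phi> ` S) + 1 / Suc n"] assms(1) by fastforce
  then obtain m where m_in: "\<And>n. m n \<in> S" and m_lt: "\<And>n. \<Phi> (m n) < Inf (\<Phi> ` S) + 1 / Suc n"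
    by metis
  have "(\<lambda>n. \<Phi> (m n)) \<longlonglongrightarrow> Inf (\<Phi> ` S)"
  proof (rule tendsto_sandwich)
    show "\<forall>\<^sub>F n in sequentially. Inf (\<Phi> ` S) \<le> \<Phi> (m n)"
      using assms(2) m_in by (intro always_eventually allI cInf_lower imageI)
    show "\<forall>\<^sub>F n in sequentially. \<Phi> (m n) \<le> Inf (\<Phi> ` S) + 1 / Suc n"
      using less_imp_le[OF m_lt] by (intro always_eventually allI)
    show "(\<lambda>n. Inf (\<Phi> ` S) + 1 / real (Suc n)) \<longlonglongrightarrow> Inf (\<Phi> ` S)"
      using tendsto_add[OF tendsto_const LIMSEQ_inverse_real_of_nat] by (simp add: inverse_eq_divide)
  qed simp
  with m_in show thesis
    by (rule that)
qed

lemma minimizing_sequence_Cauchy: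
  fixes M :: "'a::real_inner set" and f :: "'a \<Rightarrow> real"
  assumes "subspace M"
    and add: "\<And>a b. a \<in> M \<Longrightarrow> b \<in> M \<Longrightarrow> f (a + b) = f a + f b"
    and scale: "\<And>c a. a \<in> M \<Longrightarrow> f (c *\<^sub>R a) = c * f a"
    and lower: "\<And>m. m \<in> M \<Longrightarrow> d \<le> (norm m)\<^sup>2 - 2 * f m"
    and m_in: "\<And>n. m n \<in> M" and lim: "(\<lambda>n. (norm (m n))\<^sup>2 - 2 * f (m n)) \<longlonglongrightarrow> d"
  shows "Cauchy m"
proof -
  define \<Phi> where "\<Phi> m = (norm m)\<^sup>2 - 2 * f m" for m
  \<comment> \<open>parallelogram law at the midpoint\<close>
  have "(dist (m i) (m j))\<^sup>2 \<le> 2 * (\<Phi> (m i) - d) + 2 * (\<Phi> (m j) - d)" for i j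
  proof -
    have mid: "(1/2) *\<^sub>R (m i + m j) \<in> M"
      using m_in \<open>subspace M\<close> by (simp add: subspace_add subspace_scale)
    have "(dist (m i) (m j))\<^sup>2 = 2 * \<Phi> (m i) + 2 * \<Phi> (m j) - 4 * \<Phi> ((1/2) *\<^sub>R (m i + m j))"
      using scale[OF subspace_add[OF \<open>subspace M\<close> m_in m_in], of "1/2"] add[OF m_in m_in]
      unfolding \<Phi>_def dist_norm power2_norm_eq_inner
      by (simp add: inner_simps inner_commute algebra_simps)
    also have "\<dots> \<le> 2 * (\<Phi> (m i) - d) + 2 * (\<Phi> (m j) - d)"
      using lower[OF mid] by (simp add: \<Phi>_def)
    finally show ?thesis .
  qed
  then show ?thesis
    using tendsto_mult_right_zero[OF LIM_zero[OF lim[folded \<Phi>_def]], of 2]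
    by (rule Cauchy_if_dist_sq_le_vanishing)
qed

lemma quadratic_functional_has_minimizer:
  fixes M :: "'a::{real_inner,complete_space} set" and f :: "'a \<Rightarrow> real"
  assumes "closed M" and "subspace M"
    and add: "\<And>a b. a \<in> M \<Longrightarrow> b \<in> M \<Longrightarrow> f (a + b) = f a + f b"
    and scale: "\<And>c a. a \<in> M \<Longrightarrow> f (c *\<^sub>R a) = c * f a"
    and bound: "\<And>a. a \<in> M \<Longrightarrow> \<bar>f a\<bar> \<le> C * norm a"
  shows "\<exists>p\<in>M. \<forall>m\<in>M. (norm p)\<^sup>2 - 2 * f p \<le> (norm m)\<^sup>2 - 2 * f m"
proof -
  define \<Phi> where "\<Phi> m = (norm m)\<^sup>2 - 2 * f m" for m
  have "- C\<^sup>2 \<le> \<Phi> m" if "m \<in> M" for m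
    using bound[OF that] zero_le_power2[of "norm m - C"]
    unfolding \<Phi>_def power2_eq_square by (simp add: algebra_simps)
  then have bdd: "bdd_below (\<Phi> ` M)"
    by (rule bdd_belowI2)
  define d where "d = Inf (\<Phi> ` M)"
  have d_le: "d \<le> \<Phi> m" if "m \<in> M" for m
    unfolding d_def using bdd that by (auto intro: cInf_lower)
  obtain m where m_in: "\<And>n. m n \<in> M" and lim: "(\<lambda>n. \<Phi> (m n)) \<longlonglongrightarrow> d"
    using minimizing_sequence_exists[OF _ bdd] subspace_0[OF \<open>subspace M\<close>] unfolding d_def by blast
  have "Cauchy m"
    using \<open>subspace M\<close> add scale d_le[unfolded \<Phi>_def] m_in lim[unfolded \<Phi>_def]
    by (rule minimizing_sequence_Cauchy)
  then obtain p where mp: "m \<longlonglongrightarrow> p"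
    using Cauchy_convergent_iff convergent_def by blast
  have "p \<in> M"
    using closed_sequentially[OF \<open>closed M\<close>] m_in mp by blast
  have "norm (f (m n) - f p) \<le> C * norm (m n - p)" for n
    using bound[OF subspace_diff[OF \<open>subspace M\<close> m_in \<open>p \<in> M\<close>]]
      add[OF subspace_diff[OF \<open>subspace M\<close> m_in \<open>p \<in> M\<close>] \<open>p \<in> M\<close>] by simp
  then have "(\<lambda>n. f (m n) - f p) \<longlonglongrightarrow> 0"
    by (rule Lim_null_comparison[OF always_eventually[OF allI]])
      (rule tendsto_mult_right_zero[OF tendsto_norm_zero[OF LIM_zero[OF mp]]])
  then have "(\<lambda>n. f (m n)) \<longlonglongrightarrow> f p"
    by (rule LIM_zero_cancel)
  then have "(\<lambda>n. \<Phi> (m n)) \<longlonglongrightarrow> \<Phi> p"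
    unfolding \<Phi>_def by (intro tendsto_intros mp)
  then have "\<Phi> p = d"
    using lim LIMSEQ_unique by blast
  then show ?thesis
    using \<open>p \<in> M\<close> d_le unfolding \<Phi>_def by auto
qed

lemma riesz_representation_closed_subspace:
  fixes M :: "'a::{real_inner,complete_space} set" and f :: "'a \<Rightarrow> real"
  assumes "closed M" and "subspace M"
    and add: "\<And>a b. a \<in> M \<Longrightarrow> b \<in> M \<Longrightarrow> f (a + b) = f a + f b"
    and scale: "\<And>c a. a \<in> M \<Longrightarrow> f (c *\<^sub>R a) = c * f a"
    and bound: "\<And>a. a \<in> M \<Longrightarrow> \<bar>f a\<bar> \<le> C * norm a"
  obtains p where "p \<in> M" and "\<And>h. h \<in> M \<Longrightarrow> inner p h = f h"
proof -
  obtain p where "p \<in> M" and min: "\<And>m. m \<in> M \<Longrightarrow> (norm p)\<^sup>2 - 2 * f p \<le> (norm m)\<^sup>2 - 2 * f m"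
    using quadratic_functional_has_minimizer[OF assms] by blast
  have "inner p h = f h" if "h \<in> M" for h
  proof -
    have "0 \<le> t * (2 * (inner p h - f h) + t * (norm h)\<^sup>2)" for t
    proof -
      have "t *\<^sub>R h \<in> M"
        using \<open>subspace M\<close> that by (rule subspace_scale)
      then have "(norm p)\<^sup>2 - 2 * f p \<le> (norm (p + t *\<^sub>R h))\<^sup>2 - 2 * (f p + t * f h)"
        using min[OF subspace_add[OF \<open>subspace M\<close> \<open>p \<in> M\<close>]] add[OF \<open>p \<in> M\<close>] scale[OF that]
        by metis
      then show ?thesis
        unfolding power2_norm_eq_inner by (simp add: inner_simps inner_commute algebra_simps)
    qed
    then show ?thesis
      using linear_coeff_zero_if_quadratic_nonneg[of "(norm h)\<^sup>2" "inner p h - f h"] by simp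
  qed
  with \<open>p \<in> M\<close> show thesis
    by (rule that)
qed

lemma LIMSEQ_if_subseqs_have_LIMSEQ_subseq:
  fixes X :: "nat \<Rightarrow> 'a::metric_space"
  assumes "\<And>r :: nat \<Rightarrow> nat. strict_mono r \<Longrightarrow> \<exists>s. strict_mono s \<and> (X \<circ> r \<circ> s) \<longlonglongrightarrow> l"
  shows "X \<longlonglongrightarrow> l"
proof (rule ccontr)
  assume "\<not> X \<longlonglongrightarrow> l"
  then obtain e where "0 < e" and far: "\<And>N. \<exists>n\<ge>N. e \<le> dist (X n) l"
    unfolding LIMSEQ_def by (auto simp: not_less)
  define S where "S = {n::nat. e \<le> dist (X n) l}"
  have "infinite S"
    unfolding S_def infinite_nat_iff_unbounded_le using far by blast
  then have r: "strict_mono (enumerate S)" and r_in: "\<And>n. enumerate S n \<in> S"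
    by (auto intro: strict_monoI enumerate_mono enumerate_in_set)
  obtain s where "strict_mono s" and "(X \<circ> enumerate S \<circ> s) \<longlonglongrightarrow> l"
    using assms[OF r] by blast
  then obtain N where "dist (X (enumerate S (s N))) l < e"
    using \<open>0 < e\<close> unfolding LIMSEQ_def by auto
  with r_in[of "s N"] show False
    unfolding S_def by simp
qed

lemma diagonal_convergent_subsequence:
  fixes f :: "nat \<Rightarrow> nat \<Rightarrow> real"
  assumes "\<And>j. bounded (range (f j))"
  obtains \<sigma> where "strict_mono \<sigma>" and "\<And>j. convergent (\<lambda>n. f j (\<sigma> n))"
proof -
  define P where "P j s \<longleftrightarrow> convergent (\<lambda>n. f j (s n))" for j and s :: "nat \<Rightarrow> nat"
  have "subseqs P"
  proof
    fix j :: nat and s :: "nat \<Rightarrow> nat"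
    have "bounded (range (\<lambda>n. f j (s n)))"
      using assms[of j] by (rule bounded_subset) auto
    then obtain r l where "strict_mono r" and "((\<lambda>n. f j (s n)) \<circ> r) \<longlonglongrightarrow> l"
      using bounded_imp_convergent_subsequence by blast
    then show "\<exists>r. strict_mono r \<and> P j (s \<circ> r)"
      by (auto simp: P_def convergent_def o_def)
  qed
  have "convergent (\<lambda>n. f j (subseqs.diagseq P n))" for j
  proof -
    have "P j (subseqs.diagseq P \<circ> (+) (Suc j))"
      using \<open>subseqs P\<close> by (rule subseqs.diagseq_holds) (auto dest: convergent_subseq_convergent simp: P_def o_def)
    then show ?thesis
      using convergent_ignore_initial_segment[of "\<lambda>n. f j (subseqs.diagseq P n)" "Suc j"]
      by (simp add: P_def o_def add.commute)
  qed
  with subseqs.subseq_diagseq[OF \<open>subseqs P\<close>] show thesis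
    by (rule that)
qed

lemma closed_inner_convergent:
  fixes X :: "nat \<Rightarrow> 'a::real_inner"
  assumes "bounded (range X)"
  shows "closed {y. convergent (\<lambda>n. inner (X n) y)}"
  unfolding closed_sequential_limits
proof (intro allI impI, elim conjE)
  fix Y :: "nat \<Rightarrow> 'a" and y
  assume Y: "\<forall>k. Y k \<in> {y. convergent (\<lambda>n. inner (X n) y)}" and "Y \<longlonglongrightarrow> y"
  obtain R where "0 < R" and R: "\<And>n. norm (X n) \<le> R"
    using assms by (auto simp: bounded_pos)
  have "Cauchy (\<lambda>n. inner (X n) y)"
  proof (rule metric_CauchyI)
    fix e :: real
    assume "0 < e"
    then obtain k where k: "norm (y - Y k) < e / (4 * R)"
      using \<open>Y \<longlonglongrightarrow> y\<close> \<open>0 < R\<close> unfolding LIMSEQ_def dist_norm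
      by (metis divide_pos_pos mult_pos_pos norm_minus_commute zero_less_numeral order_refl)
    have "Cauchy (\<lambda>n. inner (X n) (Y k))"
      using Y by (simp add: Cauchy_convergent_iff)
    then obtain N where N: "\<And>m n. N \<le> m \<Longrightarrow> N \<le> n \<Longrightarrow> dist (inner (X m) (Y k)) (inner (X n) (Y k)) < e / 2"
      using metric_CauchyD[of _ "e / 2"] \<open>0 < e\<close> by (metis half_gt_zero)
    have "dist (inner (X m) y) (inner (X n) y) < e" if "N \<le> m" "N \<le> n" for m n
    proof -
      have "inner (X m) y - inner (X n) y
          = (inner (X m) (Y k) - inner (X n) (Y k)) + inner (X m - X n) (y - Y k)"
        by (simp add: inner_diff_left inner_diff_right)
      moreover have "\<bar>inner (X m - X n) (y - Y k)\<bar> \<le> 2 * R * norm (y - Y k)"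
      proof -
        have "norm (X m - X n) \<le> 2 * R"
          using norm_triangle_ineq4[of "X m" "X n"] R[of m] R[of n] by linarith
        from order_trans[OF Cauchy_Schwarz_ineq2 mult_right_mono[OF this norm_ge_zero]] show ?thesis .
      qed
      moreover have "2 * R * norm (y - Y k) < e / 2"
        using k \<open>0 < R\<close> by (simp add: field_simps)
      ultimately show ?thesis
        using N[OF that] unfolding dist_real_def by linarith
    qed
    then show "\<exists>N. \<forall>m\<ge>N. \<forall>n\<ge>N. dist (inner (X m) y) (inner (X n) y) < e"
      by blast
  qed
  then show "y \<in> {y. convergent (\<lambda>n. inner (X n) y)}"
    by (simp add: Cauchy_convergent_iff)
qed

lemma subspace_inner_convergent: "subspace {y. convergent (\<lambda>n. inner (X n) y)}"
  unfolding subspace_def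
  by (auto simp: inner_add_right convergent_const intro: convergent_add)
    (auto simp: convergent_def intro: tendsto_mult_left)

lemma weakly_converges_subseq:
  assumes "weakly_converges x p" and "strict_mono r"
  shows "weakly_converges (x \<circ> r) p"
  using assms LIMSEQ_subseq_LIMSEQ unfolding weakly_converges_def by (fastforce simp: o_def)

lemma tendsto_imp_weakly_converges:
  assumes "x \<longlonglongrightarrow> p"
  shows "weakly_converges x p"
  unfolding weakly_converges_def using assms by (auto intro: tendsto_inner)

lemma weakly_converges_add:
  assumes "weakly_converges x p" and "weakly_converges y q"
  shows "weakly_converges (\<lambda>n. x n + y n) (p + q)"
  using assms unfolding weakly_converges_def by (auto simp: inner_add_left intro: tendsto_add)

lemma weakly_converges_diff:
  assumes "weakly_converges x p" and "weakly_converges y q"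
  shows "weakly_converges (\<lambda>n. x n - y n) (p - q)"
  using assms unfolding weakly_converges_def by (auto simp: inner_diff_left intro: tendsto_diff)

lemma bounded_range_inner:
  fixes X Y :: "nat \<Rightarrow> 'a::real_inner"
  assumes "bounded (range X)" and "bounded (range Y)"
  shows "bounded (range (\<lambda>n. inner (X n) (Y n)))"
proof -
  obtain a b where a: "\<And>n. norm (X n) \<le> a" and b: "\<And>n. norm (Y n) \<le> b"
    using assms by (auto simp: bounded_iff)
  have "norm (inner (X n) (Y n)) \<le> a * b" for n
    using order_trans[OF Cauchy_Schwarz_ineq2 mult_mono[OF a b order_trans[OF norm_ge_zero a] norm_ge_zero]]
    by simp
  then show ?thesis
    by (intro boundedI[of _ "a * b"]) auto
qed

lemma weakly_converges_if_converges_on_closed_subspace: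
  fixes X :: "nat \<Rightarrow> 'a::{real_inner,complete_space}"
  assumes "closed M" and "subspace M" and "\<And>n. X n \<in> M" and "p \<in> M"
    and lim: "\<And>h. h \<in> M \<Longrightarrow> (\<lambda>n. inner (X n) h) \<longlonglongrightarrow> inner p h"
  shows "weakly_converges X p"
  unfolding weakly_converges_def
proof
  fix y
  \<comment> \<open>\<open>q\<close> is the orthogonal projection of \<open>y\<close> onto \<open>M\<close>\<close>
  obtain q where "q \<in> M" and q: "\<And>h. h \<in> M \<Longrightarrow> inner q h = inner y h"
    using riesz_representation_closed_subspace[OF assms(1,2), of "inner y" "norm y"]
    by (metis Cauchy_Schwarz_ineq2 inner_add_right inner_scaleR_right)
  have "inner (X n) y = inner (X n) q" for n
    using q[OF assms(3)] by (simp add: inner_commute)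
  moreover have "inner p y = inner p q"
    using q[OF assms(4)] by (simp add: inner_commute)
  ultimately show "(\<lambda>n. inner (X n) y) \<longlonglongrightarrow> inner p y"
    using lim[OF \<open>q \<in> M\<close>] by simp
qed

lemma weakly_convergent_if_inner_self_convergent:
  fixes X :: "nat \<Rightarrow> 'a::{real_inner,complete_space}"
  assumes "bounded (range X)" and conv: "\<And>j. convergent (\<lambda>n. inner (X n) (X j))"
  obtains p where "weakly_converges X p"
proof -
  obtain R where R: "\<And>n. norm (X n) \<le> R"
    using assms by (auto simp: bounded_iff)
  define M where "M = {y. convergent (\<lambda>n. inner (X n) y)}"
  define f where "f y = lim (\<lambda>n. inner (X n) y)" for y
  have f: "(\<lambda>n. inner (X n) y) \<longlonglongrightarrow> f y" if "y \<in> M" for y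
    using that unfolding M_def f_def by (simp add: convergent_LIMSEQ_iff)
  have "closed M" and "subspace M"
    unfolding M_def using closed_inner_convergent[OF assms(1)] subspace_inner_convergent by auto
  have "f (a + b) = f a + f b" if "a \<in> M" "b \<in> M" for a b
    using f[OF that(1)] f[OF that(2)] f[OF subspace_add[OF \<open>subspace M\<close> that]]
    by (simp add: inner_add_right LIMSEQ_unique tendsto_add)
  moreover have "f (c *\<^sub>R a) = c * f a" if "a \<in> M" for a c
  proof (rule LIMSEQ_unique[OF f[OF subspace_scale[OF \<open>subspace M\<close> that]]])
    show "(\<lambda>n. inner (X n) (c *\<^sub>R a)) \<longlonglongrightarrow> c * f a"
      using tendsto_mult_left[OF f[OF that]] by simp
  qed
  moreover have "\<bar>f a\<bar> \<le> R * norm a" if "a \<in> M" for a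
  proof (rule LIMSEQ_le_const2[OF tendsto_rabs[OF f[OF that]]])
    have "\<bar>inner (X n) a\<bar> \<le> R * norm a" for n
      using Cauchy_Schwarz_ineq2[of "X n" a] mult_right_mono[OF R norm_ge_zero] by (rule order_trans)
    then show "\<exists>N. \<forall>n\<ge>N. \<bar>inner (X n) a\<bar> \<le> R * norm a"
      by blast
  qed
  ultimately obtain p where "p \<in> M" and p: "\<And>h. h \<in> M \<Longrightarrow> inner p h = f h"
    using riesz_representation_closed_subspace[OF \<open>closed M\<close> \<open>subspace M\<close>] by metis
  have "weakly_converges X p"
  proof (rule weakly_converges_if_converges_on_closed_subspace[OF \<open>closed M\<close> \<open>subspace M\<close> _ \<open>p \<in> M\<close>])
    show "X n \<in> M" for n
      unfolding M_def using conv by simp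
    show "(\<lambda>n. inner (X n) h) \<longlonglongrightarrow> inner p h" if "h \<in> M" for h
      using f[OF that] p[OF that] by simp
  qed
  then show thesis
    by (rule that)
qed

lemma weakly_convergent_subsequence:
  fixes x :: "nat \<Rightarrow> 'a::{real_inner,complete_space}"
  assumes "bounded (range x)"
  obtains \<sigma> p where "strict_mono \<sigma>" and "weakly_converges (x \<circ> \<sigma>) p"
proof -
  have "bounded (range (\<lambda>n. inner (x n) (x j)))" for j
    using bounded_range_inner[OF assms, of "\<lambda>_. x j"] by simp
  then obtain \<sigma> where "strict_mono \<sigma>" and conv: "\<And>j. convergent (\<lambda>n. inner (x (\<sigma> n)) (x j))"
    using diagonal_convergent_subsequence[of "\<lambda>j n. inner (x n) (x j)"] by blast
  have "bounded (range (x \<circ> \<sigma>))"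
    using assms by (rule bounded_subset) auto
  moreover have "convergent (\<lambda>n. inner ((x \<circ> \<sigma>) n) ((x \<circ> \<sigma>) j))" for j
    using conv[of "\<sigma> j"] by simp
  ultimately obtain p where "weakly_converges (x \<circ> \<sigma>) p"
    using weakly_convergent_if_inner_self_convergent by blast
  with \<open>strict_mono \<sigma>\<close> show thesis
    by (rule that)
qed

lemma weak_cluster_points_eq:
  fixes x :: "nat \<Rightarrow> 'a::real_inner"
  assumes "convergent (\<lambda>k. norm (x k - p))" and "convergent (\<lambda>k. norm (x k - q))"
    and "strict_mono \<sigma>" and "weakly_converges (x \<circ> \<sigma>) p"
    and "strict_mono \<rho>" and "weakly_converges (x \<circ> \<rho>) q"
  shows "p = q"
proof -
  have "(norm (x k - p))\<^sup>2 - (norm (x k - q))\<^sup>2 = 2 * inner (x k) (q - p) + ((norm p)\<^sup>2 - (norm q)\<^sup>2)" for k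
    unfolding power2_norm_eq_inner by (simp add: inner_simps inner_commute)
  moreover have "convergent (\<lambda>k. (norm (x k - p))\<^sup>2 - (norm (x k - q))\<^sup>2)"
    using convergent_diff[OF convergent_mult[OF assms(1,1)] convergent_mult[OF assms(2,2)]]
    by (simp add: power2_eq_square)
  ultimately have "convergent (\<lambda>k. inner (x k) (q - p))"
    by (simp add: convergent_add_const_right_iff convergent_mult_const_iff)
  then obtain l where l: "(\<lambda>k. inner (x k) (q - p)) \<longlonglongrightarrow> l"
    by (auto simp: convergent_def)
  have "inner p (q - p) = l" and "inner q (q - p) = l"
    using assms(4,6) LIMSEQ_subseq_LIMSEQ[OF l assms(3)] LIMSEQ_subseq_LIMSEQ[OF l assms(5)]
    unfolding weakly_converges_def by (auto simp: o_def intro: LIMSEQ_unique)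
  then have "inner (q - p) (q - p) = 0"
    by (simp add: inner_diff_left)
  then show ?thesis
    by simp
qed

lemma opial:
  fixes x :: "nat \<Rightarrow> 'a::{real_inner,complete_space}"
  assumes "Z \<noteq> {}"
    and dist_conv: "\<And>z. z \<in> Z \<Longrightarrow> convergent (\<lambda>k. norm (x k - z))"
    and cluster: "\<And>\<sigma> p. strict_mono \<sigma> \<Longrightarrow> weakly_converges (x \<circ> \<sigma>) p \<Longrightarrow> p \<in> Z"
  shows "\<exists>p\<in>Z. weakly_converges x p"
proof -
  obtain z where "z \<in> Z"
    using assms(1) by blast
  have "bounded (range (\<lambda>k. x k - z))"
    using convergent_imp_Bseq[OF dist_conv[OF \<open>z \<in> Z\<close>]]
    by (simp add: Bseq_eq_bounded bounded_norm_comp image_image)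
  from bounded_translation[OF this, of z] have "bounded (range x)"
    by (simp add: image_image)
  then have bounded: "bounded (range (x \<circ> r))" for r
    by (rule bounded_subset) auto
  obtain \<sigma> p where "strict_mono \<sigma>" and "weakly_converges (x \<circ> \<sigma>) p"
    using weakly_convergent_subsequence[OF bounded[of id]] by auto
  then have "p \<in> Z"
    by (rule cluster)
  have "(\<lambda>k. inner (x k) y) \<longlonglongrightarrow> inner p y" for y
  proof (rule LIMSEQ_if_subseqs_have_LIMSEQ_subseq)
    fix r :: "nat \<Rightarrow> nat"
    assume "strict_mono r"
    obtain s q where "strict_mono s" and q: "weakly_converges (x \<circ> r \<circ> s) q"
      using weakly_convergent_subsequence[OF bounded[of r]] by blast
    then have rs: "strict_mono (r \<circ> s)" and "weakly_converges (x \<circ> (r \<circ> s)) q"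
      using \<open>strict_mono r\<close> by (auto simp: strict_mono_o o_assoc)
    then have "q = p"
      using weak_cluster_points_eq dist_conv cluster \<open>p \<in> Z\<close> \<open>strict_mono \<sigma>\<close> \<open>weakly_converges (x \<circ> \<sigma>) p\<close>
      by metis
    then show "\<exists>s. strict_mono s \<and> ((\<lambda>k. inner (x k) y) \<circ> r \<circ> s) \<longlonglongrightarrow> inner p y"
      using \<open>strict_mono s\<close> q unfolding weakly_converges_def by (auto simp: o_def)
  qed
  then show ?thesis
    using \<open>p \<in> Z\<close> unfolding weakly_converges_def by blast
qed

lemma tendsto_inner_bounded_zero:
  fixes X Y :: "nat \<Rightarrow> 'a::real_inner"
  assumes "bounded (range X)" and "Y \<longlonglongrightarrow> 0"
  shows "(\<lambda>n. inner (X n) (Y n)) \<longlonglongrightarrow> 0"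
proof -
  have "Bfun X sequentially"
    using assms(1) Bseq_eq_bounded Bseq_conv_Bfun by blast
  moreover have "Zfun Y sequentially"
    using assms(2) by (simp add: tendsto_Zfun_iff)
  ultimately have "Zfun (\<lambda>n. inner (X n) (Y n)) sequentially"
    by (rule bounded_bilinear.Bfun_prod_Zfun[OF bounded_bilinear_inner])
  then show ?thesis
    by (simp add: tendsto_Zfun_iff)
qed

lemma bounded_lipschitz_image:
  assumes "L-lipschitz_on S f" and "bounded S"
  shows "bounded (f ` S)"
proof (cases "S = {}")
  case False
  then obtain y0 where "y0 \<in> S"
    by blast
  obtain c e where e: "\<And>y. y \<in> S \<Longrightarrow> dist c y \<le> e"
    using assms(2) unfolding bounded_def by blast
  have "dist (f y0) (f y) \<le> L * (2 * e)" if "y \<in> S" for y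
  proof -
    have "dist (f y0) (f y) \<le> L * dist y0 y"
      using assms(1) \<open>y0 \<in> S\<close> that by (rule lipschitz_onD)
    also have "\<dots> \<le> L * (2 * e)"
    proof (rule mult_left_mono[OF _ lipschitz_on_nonneg[OF assms(1)]])
      show "dist y0 y \<le> 2 * e"
        using dist_triangle3[of y0 y c] e[OF \<open>y0 \<in> S\<close>] e[OF that] by linarith
    qed
    finally show ?thesis .
  qed
  then show ?thesis
    unfolding bounded_def by (intro exI[of _ "f y0"] exI[of _ "L * (2 * e)"]) blast
qed simp

lemma subsequence_weak_and_inner_convergent:
  fixes P Q :: "nat \<Rightarrow> 'a::{real_inner,complete_space}"
  assumes "bounded (range P)" and "bounded (range Q)"
  obtains k b s where "strict_mono k" and "weakly_converges (Q \<circ> k) b"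
    and "(\<lambda>n. inner (P (k n)) (Q (k n))) \<longlonglongrightarrow> s"
proof -
  obtain \<tau> b where "strict_mono \<tau>" and b: "weakly_converges (Q \<circ> \<tau>) b"
    using weakly_convergent_subsequence[OF assms(2)] by blast
  have "bounded (range (\<lambda>n. inner ((P \<circ> \<tau>) n) ((Q \<circ> \<tau>) n)))"
    using assms by (intro bounded_range_inner) (auto elim: bounded_subset)
  then obtain \<nu> s where "strict_mono \<nu>"
    and "((\<lambda>n. inner ((P \<circ> \<tau>) n) ((Q \<circ> \<tau>) n)) \<circ> \<nu>) \<longlonglongrightarrow> s"
    using bounded_imp_convergent_subsequence by blast
  moreover have "weakly_converges (Q \<circ> (\<tau> \<circ> \<nu>)) b"
    using weakly_converges_subseq[OF b \<open>strict_mono \<nu>\<close>] by (simp add: o_assoc)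
  ultimately show thesis
    using that[OF strict_mono_o[OF \<open>strict_mono \<tau>\<close> \<open>strict_mono \<nu>\<close>]] by (simp add: o_def)
qed

lemma lipschitz_diff_tendsto_zero:
  fixes f :: "'a::real_normed_vector \<Rightarrow> 'b::real_normed_vector"
  assumes "L-lipschitz_on UNIV f" and "(\<lambda>n. X n - Y n) \<longlonglongrightarrow> 0"
  shows "(\<lambda>n. f (X n) - f (Y n)) \<longlonglongrightarrow> 0"
proof -
  have "norm (f (X n) - f (Y n)) \<le> L * norm (X n - Y n)" for n
    using assms(1) by (rule lipschitz_on_normD) simp_all
  then show ?thesis
    by (rule Lim_null_comparison[OF always_eventually[OF allI]])
      (rule tendsto_mult_right_zero[OF tendsto_norm_zero[OF assms(2)]])
qed

lemma inner_weak_limit_ge: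
  fixes P V :: "nat \<Rightarrow> 'a::real_inner"
  assumes "\<And>n. 0 \<le> inner (P n - y) (V n - w)"
    and "weakly_converges P p" and "weakly_converges V v"
    and "(\<lambda>n. inner (P n) (V n)) \<longlonglongrightarrow> s"
  shows "inner p v - s \<le> inner (p - y) (v - w)"
proof -
  have "(\<lambda>n. inner (P n) w) \<longlonglongrightarrow> inner p w"
    using assms(2) unfolding weakly_converges_def by blast
  moreover have "(\<lambda>n. inner y (V n)) \<longlonglongrightarrow> inner y v"
    using assms(3) unfolding weakly_converges_def by (simp add: inner_commute[of y])
  ultimately have "(\<lambda>n. inner (P n - y) (V n - w)) \<longlonglongrightarrow> s - inner y v - (inner p w - inner y w)"
    unfolding inner_diff_left inner_diff_right by (intro tendsto_diff assms(4) tendsto_const)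
  then have "0 \<le> s - inner y v - (inner p w - inner y w)"
    by (rule LIMSEQ_le_const) (use assms(1) in blast)
  then show ?thesis
    by (simp add: inner_diff_left inner_diff_right)
qed

section \<open>Monotone operators\<close>

lemma monotone_opD:
  assumes "monotone_op A" and "u \<in> A x" and "v \<in> A y"
  shows "0 \<le> inner (x - y) (u - v)"
  using assms unfolding monotone_op_def by blast

lemma max_monotone_op_imp_monotone_op: "max_monotone_op A \<Longrightarrow> monotone_op A"
  unfolding max_monotone_op_def by blast

lemma monotone_funD: "monotone_fun B \<Longrightarrow> 0 \<le> inner (x - y) (B x - B y)"
  unfolding monotone_fun_def by blast

lemma resolvent_iff:
  assumes "lam \<noteq> 0"
  shows "p \<in> resolvent lam A z \<longleftrightarrow> inverse lam *\<^sub>R (z - p) \<in> A p"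
proof -
  have "z = p + lam *\<^sub>R u \<longleftrightarrow> u = inverse lam *\<^sub>R (z - p)" for u
    using assms by (auto simp: scaleR_scaleR)
  then show ?thesis
    unfolding resolvent_def by auto
qed

lemma zeros_sum_iff: "z \<in> zeros_sum A B \<longleftrightarrow> - B z \<in> A z"
  unfolding zeros_sum_def by (auto simp: eq_neg_iff_add_eq_0[symmetric])

lemma max_monotone_op_memI:
  assumes "max_monotone_op A" and related: "\<And>y v. v \<in> A y \<Longrightarrow> 0 \<le> inner (p - y) (b - v)"
  shows "b \<in> A p"
proof -
  define A' where "A' = A(p := insert b (A p))"
  have "monotone_op A'"
    unfolding monotone_op_def
  proof (intro allI impI)
    fix x y u v
    assume "u \<in> A' x" and "v \<in> A' y"
    then consider "u \<in> A x" "v \<in> A y" | "x = p" "u = b" "v \<in> A y" | "u \<in> A x" "y = p" "v = b"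
      | "x = p" "u = b" "y = p" "v = b"
      unfolding A'_def by (auto split: if_splits)
    then show "0 \<le> inner (x - y) (u - v)"
    proof cases
      case 1
      then show ?thesis
        using monotone_opD[OF max_monotone_op_imp_monotone_op[OF assms(1)]] by blast
    next
      case 2
      then show ?thesis
        using related by simp
    next
      case 3
      then show ?thesis
        using related[of u x] by (simp add: inner_diff_left inner_diff_right)
    next
      case 4
      then show ?thesis
        by simp
    qed
  qed
  moreover have "A x \<subseteq> A' x" for x
    unfolding A'_def by auto
  ultimately have "A' = A"
    using assms(1) unfolding max_monotone_op_def by blast
  then show ?thesis
    unfolding A'_def by (metis fun_upd_same insertI1)
qed

lemma eq_if_monotonically_related:
  fixes B :: "'a::real_inner \<Rightarrow> 'a"
  assumes "isCont B p" and related: "\<And>z. 0 \<le> inner (p - z) (b - B z)"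
  shows "b = B p"
proof -
  define w where "w = b - B p"
  define z where "z n = p + (1 / Suc n) *\<^sub>R w" for n
  have "inner w (b - B (z n)) \<le> 0" for n
    using related[of "z n"] by (simp add: z_def divide_le_0_iff)
  moreover have "z \<longlonglongrightarrow> p"
    unfolding z_def using tendsto_add[OF tendsto_const tendsto_scaleR[OF LIMSEQ_inverse_real_of_nat tendsto_const]]
    by (simp add: inverse_eq_divide)
  then have "(\<lambda>n. inner w (b - B (z n))) \<longlonglongrightarrow> inner w w"
    unfolding w_def by (intro tendsto_intros isCont_tendsto_compose[OF assms(1)])
  ultimately have "inner w w \<le> 0"
    by (simp add: LIMSEQ_le_const2)
  then have "w = 0"
    by (metis inner_eq_zero_iff inner_ge_zero order_antisym)
  then show ?thesis
    by (simp add: w_def)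
qed

lemma max_monotone_op_singleton:
  fixes B :: "'a::real_inner \<Rightarrow> 'a"
  assumes "monotone_fun B" and "continuous_on UNIV B"
  shows "max_monotone_op (\<lambda>x. {B x})"
  unfolding max_monotone_op_def
proof (intro conjI allI impI)
  show "monotone_op (\<lambda>x. {B x})"
    using assms(1) unfolding monotone_op_def monotone_fun_def by auto
  fix A'
  assume A': "monotone_op A' \<and> (\<forall>x. {B x} \<subseteq> A' x)"
  have "v = B y" if "v \<in> A' y" for y v
  proof (rule eq_if_monotonically_related[where B = B])
    show "isCont B y"
      using assms(2) continuous_on_eq_continuous_at[OF open_UNIV] by blast
    show "0 \<le> inner (y - z) (v - B z)" for z
      using A' that by (blast intro: monotone_opD)
  qed
  with A' show "A' = (\<lambda>x. {B x})"
    by blast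
qed

lemma max_monotone_op_weak_limit:
  assumes "max_monotone_op A" and "\<And>n. U n \<in> A (P n)"
    and "weakly_converges P p" and "weakly_converges U u"
    and "(\<lambda>n. inner (P n) (U n)) \<longlonglongrightarrow> t" and "t \<le> inner p u"
  shows "u \<in> A p" and "t = inner p u"
proof -
  have limit: "inner p u - t \<le> inner (p - y) (u - v)" if "v \<in> A y" for y v
    using monotone_opD[OF max_monotone_op_imp_monotone_op[OF assms(1)] assms(2) that] assms(3-5)
    by (rule inner_weak_limit_ge)
  show "u \<in> A p"
    using assms(1) by (rule max_monotone_op_memI) (use limit assms(6) in force)
  from limit[OF this] assms(6) show "t = inner p u"
    by simp
qed

lemma zeros_sum_weak_strong_closed:
  fixes A :: "'a::{real_inner,complete_space} \<Rightarrow> 'a set"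
  assumes A: "max_monotone_op A" and "monotone_fun B" and lipschitz: "L-lipschitz_on UNIV B"
    and U_in: "\<And>n. U n \<in> A (P n)" and residual: "(\<lambda>n. U n + B (P n)) \<longlonglongrightarrow> 0"
    and "weakly_converges P p" and "bounded (range P)"
  shows "p \<in> zeros_sum A B"
proof -
  have BP_bounded: "bounded (range (B \<circ> P))"
    using bounded_lipschitz_image[OF lipschitz_on_mono[OF lipschitz subset_UNIV order_refl]
        \<open>bounded (range P)\<close>]
    by (simp add: image_comp)
  obtain k b s where "strict_mono k" and BP: "weakly_converges (B \<circ> P \<circ> k) b"
    and "(\<lambda>n. inner (P (k n)) ((B \<circ> P) (k n))) \<longlonglongrightarrow> s"
    using subsequence_weak_and_inner_convergent[OF \<open>bounded (range P)\<close> BP_bounded] by blast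
  then have s: "(\<lambda>n. inner ((P \<circ> k) n) ((B \<circ> P \<circ> k) n)) \<longlonglongrightarrow> s"
    by (simp add: o_def)
  have P: "weakly_converges (P \<circ> k) p"
    using \<open>weakly_converges P p\<close> \<open>strict_mono k\<close> by (rule weakly_converges_subseq)
  have W: "(\<lambda>n. U (k n) + B (P (k n))) \<longlonglongrightarrow> 0"
    using LIMSEQ_subseq_LIMSEQ[OF residual \<open>strict_mono k\<close>] by (simp add: o_def)
  have U: "weakly_converges (U \<circ> k) (- b)"
    using weakly_converges_diff[OF tendsto_imp_weakly_converges[OF W] BP] by (simp add: o_def)
  have "bounded (range (P \<circ> k))"
    using \<open>bounded (range P)\<close> by (rule bounded_subset) auto
  from tendsto_diff[OF tendsto_inner_bounded_zero[OF this W] s]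
  have PU: "(\<lambda>n. inner ((P \<circ> k) n) ((U \<circ> k) n)) \<longlonglongrightarrow> - s"
    by (simp add: inner_add_right)
  \<comment> \<open>monotonicity of \<open>B\<close> tested at \<open>p\<close> supplies the limsup condition for \<open>A\<close>\<close>
  have "0 \<le> inner ((P \<circ> k) n - p) ((B \<circ> P \<circ> k) n - B p)" for n
    using monotone_funD[OF \<open>monotone_fun B\<close>] by simp
  from inner_weak_limit_ge[OF this P BP s] have "- s \<le> inner p (- b)"
    by simp
  moreover have "(U \<circ> k) n \<in> A ((P \<circ> k) n)" for n
    using U_in by simp
  ultimately have "- b \<in> A p" and "s = inner p b"
    using max_monotone_op_weak_limit[OF A _ P U PU] by auto
  have "max_monotone_op (\<lambda>x. {B x})"
    using \<open>monotone_fun B\<close> lipschitz_on_continuous_on[OF lipschitz] by (rule max_monotone_op_singleton)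
  moreover have "(B \<circ> P \<circ> k) n \<in> {B ((P \<circ> k) n)}" for n
    by simp
  ultimately have "b \<in> {B p}"
    using max_monotone_op_weak_limit(1)[OF _ _ P BP s] \<open>s = inner p b\<close> by blast
  with \<open>- b \<in> A p\<close> show ?thesis
    by (simp add: zeros_sum_iff)
qed

section \<open>Step-size conditions\<close>

lemma lipschitz_on_scaled_diff:
  fixes B :: "'a::real_normed_vector \<Rightarrow> 'a"
  assumes "L-lipschitz_on UNIV B" and "0 \<le> alpha" and "0 \<le> lam"
  shows "(alpha + lam * L)-lipschitz_on UNIV (\<lambda>u. alpha *\<^sub>R u - lam *\<^sub>R B u)"
  using lipschitz_on_diff[OF lipschitz_on_cmult_nonneg[OF lipschitz_on_id assms(2)]
      lipschitz_on_cmult_nonneg[OF assms(1,3)]]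
  by simp

lemma cocoercive_imp_lipschitz:
  fixes B :: "'a::real_inner \<Rightarrow> 'a"
  assumes "0 < L" and "cocoercive L B"
  shows "L-lipschitz_on UNIV B"
proof (rule lipschitz_onI)
  fix u v :: 'a
  have "(norm (B u - B v))\<^sup>2 \<le> L * inner (u - v) (B u - B v)"
    using assms mult_left_mono[of "(1 / L) * (norm (B u - B v))\<^sup>2" "inner (u - v) (B u - B v)" L]
    unfolding cocoercive_def by simp
  also have "\<dots> \<le> L * (norm (u - v) * norm (B u - B v))"
    using assms(1) norm_cauchy_schwarz by (intro mult_left_mono) auto
  finally have "norm (B u - B v) * norm (B u - B v) \<le> (L * norm (u - v)) * norm (B u - B v)"
    by (simp add: power2_eq_square mult_ac)
  then have "norm (B u - B v) \<le> L * norm (u - v)"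
    using assms(1) by (cases "B u = B v") (auto simp: mult_le_cancel_right)
  then show "dist (B u) (B v) \<le> L * dist u v"
    by (simp add: dist_norm)
qed (use assms in simp)

lemma cocoercive_scalar_bound:
  fixes alpha lam L n s :: real
  assumes "0 \<le> alpha" and "0 \<le> lam" and "0 \<le> n" and "0 \<le> s" and "s \<le> L * n"
  shows "alpha\<^sup>2 * n + lam * (lam * L - 2 * alpha) * s \<le> (max alpha (lam * L - alpha))\<^sup>2 * n"
proof (cases "lam * L \<le> 2 * alpha")
  case True
  have "lam * (lam * L - 2 * alpha) \<le> 0"
    using True assms(2) by (simp add: mult_nonneg_nonpos)
  then have "lam * (lam * L - 2 * alpha) * s \<le> 0"
    using assms(4) by (rule mult_nonpos_nonneg)
  moreover have "alpha\<^sup>2 \<le> (max alpha (lam * L - alpha))\<^sup>2"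
    using assms(1) by (intro power_mono) simp_all
  then have "alpha\<^sup>2 * n \<le> (max alpha (lam * L - alpha))\<^sup>2 * n"
    using assms(3) by (rule mult_right_mono)
  ultimately show ?thesis
    by linarith
next
  case False
  have "0 \<le> lam * (lam * L - 2 * alpha)"
    using False assms(2) by simp
  with assms(5) have "lam * (lam * L - 2 * alpha) * s \<le> lam * (lam * L - 2 * alpha) * (L * n)"
    by (rule mult_left_mono)
  moreover have "alpha\<^sup>2 * n + lam * (lam * L - 2 * alpha) * (L * n) = (lam * L - alpha)\<^sup>2 * n"
    by (simp add: power2_eq_square algebra_simps)
  moreover have "(lam * L - alpha)\<^sup>2 \<le> (max alpha (lam * L - alpha))\<^sup>2"
    using False assms(1) by (intro power_mono) simp_all
  then have "(lam * L - alpha)\<^sup>2 * n \<le> (max alpha (lam * L - alpha))\<^sup>2 * n"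
    using assms(3) by (rule mult_right_mono)
  ultimately show ?thesis
    by linarith
qed

lemma cocoercive_imp_lipschitz_on_scaled_diff:
  fixes B :: "'a::real_inner \<Rightarrow> 'a"
  assumes "0 < L" and "cocoercive L B" and "0 \<le> alpha" and "0 \<le> lam"
  shows "(max alpha (lam * L - alpha))-lipschitz_on UNIV (\<lambda>u. alpha *\<^sub>R u - lam *\<^sub>R B u)"
proof (rule lipschitz_onI)
  fix u v :: 'a
  define s where "s = inner (u - v) (B u - B v)"
  have m: "(norm (B u - B v))\<^sup>2 \<le> L * s"
    using assms(1,2) mult_left_mono[of "(1 / L) * (norm (B u - B v))\<^sup>2" s L]
    unfolding cocoercive_def s_def by simp
  then have "0 \<le> L * s"
    by (rule order_trans[OF zero_le_power2])
  then have "0 \<le> s"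
    using assms(1) by (simp add: zero_le_mult_iff)
  have "s \<le> norm (u - v) * norm (B u - B v)"
    unfolding s_def by (rule norm_cauchy_schwarz)
  also have "\<dots> \<le> norm (u - v) * (L * norm (u - v))"
    using lipschitz_on_normD[OF cocoercive_imp_lipschitz[OF assms(1,2)]] by (intro mult_left_mono) auto
  finally have "s \<le> L * (norm (u - v))\<^sup>2"
    by (simp add: power2_eq_square mult_ac)
  have "(norm (alpha *\<^sub>R (u - v) - lam *\<^sub>R (B u - B v)))\<^sup>2
      = alpha\<^sup>2 * (norm (u - v))\<^sup>2 - 2 * alpha * lam * s + lam\<^sup>2 * (norm (B u - B v))\<^sup>2"
    unfolding s_def power2_norm_eq_inner
    by (simp add: inner_diff_left inner_diff_right inner_commute power2_eq_square algebra_simps)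
  also have "\<dots> \<le> alpha\<^sup>2 * (norm (u - v))\<^sup>2 + lam * (lam * L - 2 * alpha) * s"
    using mult_left_mono[OF m, of "lam\<^sup>2"] by (simp add: power2_eq_square algebra_simps)
  also have "\<dots> \<le> (max alpha (lam * L - alpha))\<^sup>2 * (norm (u - v))\<^sup>2"
    using assms(3,4) zero_le_power2 \<open>0 \<le> s\<close> \<open>s \<le> L * (norm (u - v))\<^sup>2\<close>
    by (rule cocoercive_scalar_bound)
  also have "\<dots> = (max alpha (lam * L - alpha) * norm (u - v))\<^sup>2"
    by (rule power_mult_distrib[symmetric])
  finally have "norm (alpha *\<^sub>R (u - v) - lam *\<^sub>R (B u - B v)) \<le> max alpha (lam * L - alpha) * norm (u - v)"
    by (rule power2_le_imp_le) (use assms(3) in \<open>simp add: le_max_iff_disj\<close>)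
  moreover have "alpha *\<^sub>R u - lam *\<^sub>R B u - (alpha *\<^sub>R v - lam *\<^sub>R B v)
      = alpha *\<^sub>R (u - v) - lam *\<^sub>R (B u - B v)"
    by (simp add: algebra_simps)
  ultimately show "dist (alpha *\<^sub>R u - lam *\<^sub>R B u) (alpha *\<^sub>R v - lam *\<^sub>R B v)
      \<le> max alpha (lam * L - alpha) * dist u v"
    by (simp add: dist_norm)
qed (use assms in simp)

section \<open>Damped linear recurrences\<close>

lemma damped_recurrence_bound:
  fixes r :: "nat \<Rightarrow> real"
  assumes "0 \<le> a" and "a < 1" and step: "\<And>k. N \<le> k \<Longrightarrow> \<bar>r (Suc k) - a * r k\<bar> \<le> \<eta>"
  shows "\<bar>r (N + j)\<bar> \<le> a ^ j * \<bar>r N\<bar> + \<eta> / (1 - a)"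
proof (induction j)
  case 0
  have "0 \<le> \<eta>"
    using step[of N] by linarith
  with assms(2) show ?case
    by simp
next
  case (Suc j)
  have "\<bar>a * r (N + j)\<bar> = a * \<bar>r (N + j)\<bar>"
    using assms(1) by (simp add: abs_mult)
  with step[of "N + j"] have "\<bar>r (N + Suc j)\<bar> \<le> a * \<bar>r (N + j)\<bar> + \<eta>"
    by simp
  also have "\<dots> \<le> a * (a ^ j * \<bar>r N\<bar> + \<eta> / (1 - a)) + \<eta>"
    using Suc.IH assms(1) by (intro add_right_mono mult_left_mono) auto
  also have "\<dots> = a ^ Suc j * \<bar>r N\<bar> + \<eta> / (1 - a)"
    using assms(2) by (simp add: field_simps)
  finally show ?case .
qed

lemma damped_recurrence_LIMSEQ_zero:
  fixes r :: "nat \<Rightarrow> real"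
  assumes "0 \<le> a" and "a < 1" and "(\<lambda>k. r (Suc k) - a * r k) \<longlonglongrightarrow> 0"
  shows "r \<longlonglongrightarrow> 0"
proof (rule LIMSEQ_I)
  fix e :: real
  assume "0 < e"
  define \<eta> where "\<eta> = e * (1 - a) / 2"
  have "0 < \<eta>" and \<eta>: "\<eta> / (1 - a) = e / 2"
    using \<open>0 < e\<close> assms(2) by (simp_all add: \<eta>_def field_simps)
  obtain N where N: "\<And>k. N \<le> k \<Longrightarrow> \<bar>r (Suc k) - a * r k\<bar> \<le> \<eta>"
    using LIMSEQ_D[OF assms(3) \<open>0 < \<eta>\<close>] by (auto intro: less_imp_le)
  have "(\<lambda>j. a ^ j * \<bar>r N\<bar>) \<longlonglongrightarrow> 0"
    using assms(1,2) by (intro tendsto_mult_left_zero LIMSEQ_power_zero) simp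
  then obtain M where M: "\<And>j. M \<le> j \<Longrightarrow> a ^ j * \<bar>r N\<bar> < e / 2"
    using LIMSEQ_D[of _ 0 "e / 2"] \<open>0 < e\<close> by fastforce
  have "norm (r k - 0) < e" if "N + M \<le> k" for k
  proof -
    have "M \<le> k - N" and "N + (k - N) = k"
      using that by auto
    then show ?thesis
      using damped_recurrence_bound[where N = N and r = r and \<eta> = \<eta>, OF assms(1,2) N, of "k - N"]
        M[of "k - N"] \<eta> by simp
  qed
  then show "\<exists>K. \<forall>k\<ge>K. norm (r k - 0) < e"
    by blast
qed

lemma damped_recurrence_LIMSEQ:
  fixes d :: "nat \<Rightarrow> real"
  assumes "0 \<le> a" and "a < 1" and "(\<lambda>k. d (Suc k) - a * d k) \<longlonglongrightarrow> l"
  shows "d \<longlonglongrightarrow> l / (1 - a)"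
proof -
  define c where "c = l / (1 - a)"
  have "c - a * c = (1 - a) * c"
    by (simp add: algebra_simps)
  also have "\<dots> = l"
    using assms(2) by (simp add: c_def)
  finally have shift: "d (Suc k) - c - a * (d k - c) = (d (Suc k) - a * d k) - l" for k
    by (simp add: algebra_simps)
  have "(\<lambda>k. d (Suc k) - c - a * (d k - c)) \<longlonglongrightarrow> 0"
    unfolding shift by (rule LIM_zero[OF assms(3)])
  then have "(\<lambda>k. d k - c) \<longlonglongrightarrow> 0"
    by (rule damped_recurrence_LIMSEQ_zero[OF assms(1,2)])
  then show ?thesis
    unfolding c_def by (rule LIM_zero_cancel)
qed

lemma bdd_above_if_damped_bound:
  fixes d :: "nat \<Rightarrow> real"
  assumes "0 \<le> a" and "a < c" and step: "\<And>k. c * d (Suc k) \<le> a * d k + K"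
  shows "bdd_above (range d)"
proof -
  define D where "D = max (d 0) (K / (c - a))"
  have "(c - a) * (K / (c - a)) \<le> (c - a) * D"
    using assms(2) by (intro mult_left_mono) (auto simp: D_def)
  then have "K \<le> (c - a) * D"
    using assms(2) by simp
  have "d k \<le> D" for k
  proof (induction k)
    case (Suc k)
    have "c * d (Suc k) \<le> a * D + K"
      using step[of k] mult_left_mono[OF Suc.IH assms(1)] by linarith
    also have "\<dots> \<le> c * D"
      using \<open>K \<le> (c - a) * D\<close> by (simp add: algebra_simps)
    finally show ?case
      using assms(1,2) by simp
  qed (simp add: D_def)
  then show ?thesis
    by (rule bdd_aboveI2)
qed

section \<open>The inertial forward-reflected-backward iteration\<close>

locale inertial_forward_reflected_backward =
  fixes A :: "'a::{real_inner,complete_space} \<Rightarrow> 'a set" and B :: "'a \<Rightarrow> 'a"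
    and alpha lam kap :: real and x :: "nat \<Rightarrow> 'a"
  assumes max_monotone_A: "max_monotone_op A" and monotone_B: "monotone_fun B"
    and zeros_nonempty: "zeros_sum A B \<noteq> {}"
    and lam_pos: "0 < lam" and alpha_nonneg: "0 \<le> alpha" and alpha_le_kap: "alpha \<le> kap"
    and alpha_kap_bound: "alpha + 2 * kap < 1"
    and kap_lipschitz: "kap-lipschitz_on UNIV (\<lambda>u. alpha *\<^sub>R u - lam *\<^sub>R B u)"
    and iteration: "\<And>k. x (Suc (Suc k)) \<in> resolvent lam A
      (x (Suc k) - (2 * lam) *\<^sub>R B (x (Suc k)) + lam *\<^sub>R B (x k) + alpha *\<^sub>R (x (Suc k) - x k))"
begin

lemma kap_nonneg: "0 \<le> kap"
  using alpha_nonneg alpha_le_kap by linarith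

lemma lipschitz_B: "((alpha + kap) / lam)-lipschitz_on UNIV B"
proof -
  have "(inverse lam * (alpha * 1 + kap))-lipschitz_on UNIV
      (\<lambda>u. inverse lam *\<^sub>R (alpha *\<^sub>R u - (alpha *\<^sub>R u - lam *\<^sub>R B u)))"
    using lam_pos alpha_nonneg
    by (intro lipschitz_on_cmult_nonneg lipschitz_on_diff lipschitz_on_id kap_lipschitz) auto
  then show ?thesis
    using lam_pos by (simp add: field_simps)
qed

text \<open>\<open>energy z c q\<close> is \<open>E\<^sub>k\<close> with \<open>(c, q) = (x\<^sub>k\<^sub>+\<^sub>1, x\<^sub>k)\<close>.\<close>

definition energy :: "'a \<Rightarrow> 'a \<Rightarrow> 'a \<Rightarrow> real" where
  "energy z c q = (norm (c - z))\<^sup>2 - alpha * (norm (q - z))\<^sup>2 - 2 * lam * inner (c - z) (B c - B q)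
     + (alpha + kap) * (norm (c - q))\<^sup>2"

lemma energy_difference:
  "energy z c q - energy z p c - (1 - alpha - 2 * kap) * (norm (p - c))\<^sup>2
    = 2 * inner (p - z) ((c - p) + (alpha *\<^sub>R (c - q) - lam *\<^sub>R (B c - B q)) + lam *\<^sub>R (B p - B c))
      - 2 * inner (p - c) (alpha *\<^sub>R (c - q) - lam *\<^sub>R (B c - B q))
      + kap * ((norm (p - c))\<^sup>2 + (norm (c - q))\<^sup>2)"
  unfolding energy_def power2_norm_eq_inner
  by (simp add: inner_diff_left inner_diff_right inner_add_right inner_commute algebra_simps)

lemma resolvent_step_monotone:
  assumes "p \<in> resolvent lam A (c - (2 * lam) *\<^sub>R B c + lam *\<^sub>R B q + alpha *\<^sub>R (c - q))"
    and "z \<in> zeros_sum A B"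
  shows "0 \<le> inner (p - z) ((c - p) + (alpha *\<^sub>R (c - q) - lam *\<^sub>R (B c - B q)) + lam *\<^sub>R (B p - B c))"
proof -
  define u where "u = inverse lam *\<^sub>R (c - (2 * lam) *\<^sub>R B c + lam *\<^sub>R B q + alpha *\<^sub>R (c - q) - p)"
  have "u \<in> A p"
    using assms(1) lam_pos by (simp add: resolvent_iff u_def)
  moreover have "- B z \<in> A z"
    using assms(2) by (simp add: zeros_sum_iff)
  ultimately have "0 \<le> inner (p - z) (u - - B z) + inner (p - z) (B p - B z)"
    using monotone_opD[OF max_monotone_op_imp_monotone_op[OF max_monotone_A]] monotone_funD[OF monotone_B]
    by (meson add_nonneg_nonneg)
  also have "\<dots> = inverse lam * inner (p - z) ((c - p) + (alpha *\<^sub>R (c - q) - lam *\<^sub>R (B c - B q)) + lam *\<^sub>R (B p - B c))"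
  proof -
    have "(2 * lam) *\<^sub>R B c = lam *\<^sub>R B c + lam *\<^sub>R B c"
      by (simp add: scaleR_left_distrib[symmetric])
    then have "u - - B z + (B p - B z) = inverse lam *\<^sub>R ((c - p) + (alpha *\<^sub>R (c - q) - lam *\<^sub>R (B c - B q)) + lam *\<^sub>R (B p - B c))"
      using lam_pos by (simp add: u_def algebra_simps)
    then show ?thesis
      by (simp flip: inner_add_right)
  qed
  finally show ?thesis
    using lam_pos by (simp add: zero_le_mult_iff)
qed

lemma energy_step:
  assumes "p \<in> resolvent lam A (c - (2 * lam) *\<^sub>R B c + lam *\<^sub>R B q + alpha *\<^sub>R (c - q))"
    and "z \<in> zeros_sum A B"
  shows "energy z p c \<le> energy z c q - (1 - alpha - 2 * kap) * (norm (p - c))\<^sup>2"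
proof -
  have "norm (alpha *\<^sub>R (c - q) - lam *\<^sub>R (B c - B q)) \<le> kap * norm (c - q)"
    using lipschitz_on_normD[OF kap_lipschitz, of c q] by (simp add: algebra_simps)
  then have "inner (p - c) (alpha *\<^sub>R (c - q) - lam *\<^sub>R (B c - B q)) \<le> norm (p - c) * (kap * norm (c - q))"
    using norm_cauchy_schwarz order_trans mult_left_mono norm_ge_zero by metis
  also have "\<dots> \<le> kap * ((norm (p - c))\<^sup>2 + (norm (c - q))\<^sup>2) / 2"
    using mult_left_mono[OF sum_squares_bound[of "norm (p - c)" "norm (c - q)"] kap_nonneg]
    by (simp add: algebra_simps)
  finally show ?thesis
    using energy_difference[of z c q p] resolvent_step_monotone[OF assms] by linarith
qed

lemma energy_lower_bound:
  "(1 - alpha - kap) * (norm (c - z))\<^sup>2 - alpha * (norm (q - z))\<^sup>2 \<le> energy z c q"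
proof -
  have "lam * norm (B c - B q) \<le> (alpha + kap) * norm (c - q)"
    using lipschitz_on_normD[OF lipschitz_B, of c q] lam_pos by (simp add: field_simps)
  then have "2 * norm (c - z) * (lam * norm (B c - B q)) \<le> 2 * norm (c - z) * ((alpha + kap) * norm (c - q))"
    by (rule mult_left_mono) simp
  moreover have "2 * lam * inner (c - z) (B c - B q) \<le> 2 * norm (c - z) * (lam * norm (B c - B q))"
    using mult_left_mono[OF norm_cauchy_schwarz[of "c - z" "B c - B q"], of "2 * lam"] lam_pos
    by (simp add: mult_ac)
  ultimately have "2 * lam * inner (c - z) (B c - B q) \<le> 2 * norm (c - z) * ((alpha + kap) * norm (c - q))"
    by linarith
  also have "\<dots> \<le> (alpha + kap) * ((norm (c - z))\<^sup>2 + (norm (c - q))\<^sup>2)"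
    using mult_left_mono[OF sum_squares_bound[of "norm (c - z)" "norm (c - q)"], of "alpha + kap"]
      alpha_nonneg kap_nonneg by (simp add: algebra_simps)
  finally show ?thesis
    unfolding energy_def by (simp add: algebra_simps)
qed

lemma energy_decreasing:
  assumes "z \<in> zeros_sum A B"
  shows "energy z (x (Suc (Suc k))) (x (Suc k))
    \<le> energy z (x (Suc k)) (x k) - (1 - alpha - 2 * kap) * (norm (x (Suc (Suc k)) - x (Suc k)))\<^sup>2"
  using iteration assms by (rule energy_step)

lemma energy_le_initial:
  assumes "z \<in> zeros_sum A B"
  shows "energy z (x (Suc k)) (x k) \<le> energy z (x 1) (x 0)"
proof (induction k)
  case (Suc k)
  have "0 \<le> (1 - alpha - 2 * kap) * (norm (x (Suc (Suc k)) - x (Suc k)))\<^sup>2"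
    using alpha_kap_bound by simp
  with energy_decreasing[OF assms, of k] Suc.IH show ?case
    by linarith
qed simp

lemma dist_bdd_above:
  assumes "z \<in> zeros_sum A B"
  shows "bdd_above (range (\<lambda>k. (norm (x k - z))\<^sup>2))"
proof (rule bdd_above_if_damped_bound)
  show "alpha < 1 - alpha - kap"
    using alpha_le_kap alpha_kap_bound by linarith
  show "(1 - alpha - kap) * (norm (x (Suc k) - z))\<^sup>2 \<le> alpha * (norm (x k - z))\<^sup>2 + energy z (x 1) (x 0)" for k
    using energy_lower_bound[of "x (Suc k)" z "x k"] energy_le_initial[OF assms, of k] by linarith
qed (rule alpha_nonneg)

lemma bounded_iterates: "bounded (range x)"
proof -
  obtain z where "z \<in> zeros_sum A B"
    using zeros_nonempty by blast
  then obtain D where "\<And>k. (norm (x k - z))\<^sup>2 \<le> D"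
    using dist_bdd_above by (auto simp: bdd_above_def)
  then have "bounded (range (\<lambda>k. x k - z))"
    by (intro boundedI[of _ "sqrt D"]) (auto intro: real_le_rsqrt)
  from bounded_translation[OF this, of z] show ?thesis
    by (simp add: image_image)
qed

lemma energy_bdd_below:
  assumes "z \<in> zeros_sum A B"
  shows "bdd_below (range (\<lambda>k. energy z (x (Suc k)) (x k)))"
proof -
  obtain D where D: "\<And>k. (norm (x k - z))\<^sup>2 \<le> D"
    using dist_bdd_above[OF assms] by (auto simp: bdd_above_def)
  have "- alpha * D \<le> energy z (x (Suc k)) (x k)" for k
  proof -
    have "0 \<le> (1 - alpha - kap) * (norm (x (Suc k) - z))\<^sup>2"
      using alpha_le_kap alpha_kap_bound by simp
    moreover have "alpha * (norm (x k - z))\<^sup>2 \<le> alpha * D"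
      using D alpha_nonneg by (rule mult_left_mono)
    ultimately show ?thesis
      using energy_lower_bound[of "x (Suc k)" z "x k"] by linarith
  qed
  then show ?thesis
    by (intro bdd_belowI2)
qed

lemma summable_differences_sq: "summable (\<lambda>k. (norm (x (Suc k) - x k))\<^sup>2)"
proof -
  obtain z where z: "z \<in> zeros_sum A B"
    using zeros_nonempty by blast
  define E where "E k = energy z (x (Suc k)) (x k)" for k
  obtain C where C: "\<And>k. C \<le> E k"
    using energy_bdd_below[OF z] unfolding E_def bdd_below_def by auto
  define \<delta> where "\<delta> = 1 - alpha - 2 * kap"
  have "0 < \<delta>"
    using alpha_kap_bound by (simp add: \<delta>_def)
  have "\<delta> * (norm (x (Suc (Suc k)) - x (Suc k)))\<^sup>2 \<le> E k - E (Suc k)" for k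
    using energy_decreasing[OF z, of k] unfolding E_def \<delta>_def by linarith
  then have "(\<Sum>k<n. \<delta> * (norm (x (Suc (Suc k)) - x (Suc k)))\<^sup>2) \<le> (\<Sum>k<n. E k - E (Suc k))" for n
    by (intro sum_mono)
  also have "\<dots> n = E 0 - E n" for n
    by (rule sum_lessThan_telescope')
  finally have telescope: "\<delta> * (\<Sum>k<n. (norm (x (Suc (Suc k)) - x (Suc k)))\<^sup>2) \<le> E 0 - E n" for n
    by (simp add: sum_distrib_left)
  have "(\<Sum>k<n. (norm (x (Suc (Suc k)) - x (Suc k)))\<^sup>2) \<le> (E 0 - C) / \<delta>" for n
    using telescope[of n] C[of n] \<open>0 < \<delta>\<close> by (simp add: le_divide_eq mult.commute)
  then have "summable (\<lambda>k. (norm (x (Suc (Suc k)) - x (Suc k)))\<^sup>2)"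
    by (intro summableI_nonneg_bounded) auto
  then show ?thesis
    using summable_Suc_iff[of "\<lambda>k. (norm (x (Suc k) - x k))\<^sup>2"] by simp
qed

lemma differences_tendsto_zero: "(\<lambda>k. x (Suc k) - x k) \<longlonglongrightarrow> 0"
proof -
  have "(\<lambda>k. (norm (x (Suc k) - x k))\<^sup>2) \<longlonglongrightarrow> 0"
    using summable_differences_sq by (rule summable_LIMSEQ_zero)
  then have "(\<lambda>k. norm (x (Suc k) - x k)) \<longlonglongrightarrow> 0"
    using tendsto_real_sqrt by fastforce
  then show ?thesis
    by (simp add: tendsto_norm_zero_iff)
qed

lemma dist_convergent:
  assumes z: "z \<in> zeros_sum A B"
  shows "convergent (\<lambda>k. norm (x k - z))"
proof -
  define E where "E k = energy z (x (Suc k)) (x k)" for k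
  obtain C where "\<forall>k. C \<le> E k"
    using energy_bdd_below[OF z] unfolding E_def bdd_below_def by auto
  moreover have "E (Suc k) \<le> E k" for k
  proof -
    have "0 \<le> (1 - alpha - 2 * kap) * (norm (x (Suc (Suc k)) - x (Suc k)))\<^sup>2"
      using alpha_kap_bound by simp
    with energy_decreasing[OF z, of k] show ?thesis
      unfolding E_def by linarith
  qed
  then have "decseq E"
    by (simp add: decseq_Suc_iff)
  ultimately obtain l where "E \<longlonglongrightarrow> l"
    using decseq_convergent by blast
  have "(\<lambda>k. inner (x (Suc k) - z) (B (x (Suc k)) - B (x k))) \<longlonglongrightarrow> 0"
  proof (rule tendsto_inner_bounded_zero)
    show "bounded (range (\<lambda>k. x (Suc k) - z))"
      using bounded_translation[OF bounded_iterates, of "- z"] by (rule bounded_subset) auto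
    show "(\<lambda>k. B (x (Suc k)) - B (x k)) \<longlonglongrightarrow> 0"
      using lipschitz_B differences_tendsto_zero by (rule lipschitz_diff_tendsto_zero)
  qed
  moreover have "(\<lambda>k. (norm (x (Suc k) - x k))\<^sup>2) \<longlonglongrightarrow> 0"
    using summable_differences_sq by (rule summable_LIMSEQ_zero)
  ultimately have "(\<lambda>k. E k + 2 * lam * inner (x (Suc k) - z) (B (x (Suc k)) - B (x k))
      - (alpha + kap) * (norm (x (Suc k) - x k))\<^sup>2) \<longlonglongrightarrow> l + 2 * lam * 0 - (alpha + kap) * 0"
    using \<open>E \<longlonglongrightarrow> l\<close> by (intro tendsto_intros)
  then have "(\<lambda>k. (norm (x (Suc k) - z))\<^sup>2 - alpha * (norm (x k - z))\<^sup>2) \<longlonglongrightarrow> l"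
    by (simp add: E_def energy_def)
  then have "(\<lambda>k. (norm (x k - z))\<^sup>2) \<longlonglongrightarrow> l / (1 - alpha)"
    using alpha_nonneg alpha_le_kap alpha_kap_bound by (intro damped_recurrence_LIMSEQ) auto
  then have "(\<lambda>k. sqrt ((norm (x k - z))\<^sup>2)) \<longlonglongrightarrow> sqrt (l / (1 - alpha))"
    by (rule tendsto_real_sqrt)
  then show ?thesis
    by (auto simp: convergent_def)
qed

definition forward_point :: "nat \<Rightarrow> 'a" where
  "forward_point k = x (Suc k) - (2 * lam) *\<^sub>R B (x (Suc k)) + lam *\<^sub>R B (x k) + alpha *\<^sub>R (x (Suc k) - x k)"

lemma resolvent_residual_in_A:
  "inverse lam *\<^sub>R (forward_point k - x (Suc (Suc k))) \<in> A (x (Suc (Suc k)))"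
  using iteration[of k] lam_pos by (simp add: resolvent_iff forward_point_def)

lemma resolvent_residual_tendsto_zero:
  "(\<lambda>k. inverse lam *\<^sub>R (forward_point k - x (Suc (Suc k))) + B (x (Suc (Suc k)))) \<longlonglongrightarrow> 0"
proof -
  define h where "h k = x (Suc k) - x k" for k
  define g where "g k = B (x (Suc k)) - B (x k)" for k
  have "h \<longlonglongrightarrow> 0"
    unfolding h_def by (rule differences_tendsto_zero)
  moreover have "g \<longlonglongrightarrow> 0"
    unfolding g_def using lipschitz_B differences_tendsto_zero by (rule lipschitz_diff_tendsto_zero)
  ultimately have "(\<lambda>k. inverse lam *\<^sub>R (- h (Suc k) + alpha *\<^sub>R h k + lam *\<^sub>R g (Suc k) - lam *\<^sub>R g k))
      \<longlonglongrightarrow> inverse lam *\<^sub>R (- 0 + alpha *\<^sub>R 0 + lam *\<^sub>R 0 - lam *\<^sub>R 0)"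
    by (intro tendsto_intros) (simp_all add: filterlim_sequentially_Suc)
  moreover have "inverse lam *\<^sub>R (- h (Suc k) + alpha *\<^sub>R h k + lam *\<^sub>R g (Suc k) - lam *\<^sub>R g k)
      = inverse lam *\<^sub>R (forward_point k - x (Suc (Suc k))) + B (x (Suc (Suc k)))" for k
  proof -
    have "(2 * lam) *\<^sub>R B (x (Suc k)) = lam *\<^sub>R B (x (Suc k)) + lam *\<^sub>R B (x (Suc k))"
      by (simp add: scaleR_left_distrib[symmetric])
    then show ?thesis
      using lam_pos by (simp add: h_def g_def forward_point_def algebra_simps)
  qed
  ultimately show ?thesis
    by simp
qed

lemma weak_cluster_point_in_zeros:
  assumes "strict_mono \<sigma>" and "weakly_converges (x \<circ> \<sigma>) p"
  shows "p \<in> zeros_sum A B"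
proof (rule zeros_sum_weak_strong_closed[OF max_monotone_A monotone_B lipschitz_B])
  show "inverse lam *\<^sub>R (forward_point (\<sigma> n) - x (Suc (Suc (\<sigma> n)))) \<in> A (x (Suc (Suc (\<sigma> n))))" for n
    by (rule resolvent_residual_in_A)
  show "(\<lambda>n. inverse lam *\<^sub>R (forward_point (\<sigma> n) - x (Suc (Suc (\<sigma> n)))) + B (x (Suc (Suc (\<sigma> n))))) \<longlonglongrightarrow> 0"
    using LIMSEQ_subseq_LIMSEQ[OF resolvent_residual_tendsto_zero assms(1)] by (simp add: o_def)
  show "bounded (range (\<lambda>n. x (Suc (Suc (\<sigma> n)))))"
    using bounded_iterates by (rule bounded_subset) auto
  have "(\<lambda>k. (x (Suc (Suc k)) - x (Suc k)) + (x (Suc k) - x k)) \<longlonglongrightarrow> 0 + 0"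
    using LIMSEQ_Suc[OF differences_tendsto_zero] differences_tendsto_zero by (rule tendsto_add)
  then have "(\<lambda>n. x (Suc (Suc (\<sigma> n))) - x (\<sigma> n)) \<longlonglongrightarrow> 0"
    using LIMSEQ_subseq_LIMSEQ[OF _ assms(1)] by (fastforce simp: o_def)
  from weakly_converges_add[OF assms(2) tendsto_imp_weakly_converges[OF this]]
  show "weakly_converges (\<lambda>n. x (Suc (Suc (\<sigma> n)))) p"
    by (simp add: o_def)
qed

theorem weakly_converges_to_some_zero: "\<exists>p\<in>zeros_sum A B. weakly_converges x p"
  using zeros_nonempty dist_convergent weak_cluster_point_in_zeros by (rule opial)

end

theorem corollary4p4:
  fixes A :: "'a::{real_inner, complete_space} \<Rightarrow> 'a set"
    and B :: "'a \<Rightarrow> 'a"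
    and x :: "nat \<Rightarrow> 'a"
    and alpha lam L :: real
  assumes "max_monotone_op A"
    and "monotone_fun B"
    and "zeros_sum A B \<noteq> {}"
    and "0 \<le> alpha" and "alpha < 1 / 3"
    and "lam > 0"
    and "(L-lipschitz_on UNIV B \<and> 2 * lam * L < 1 - 3 * alpha)
         \<or> (L > 0 \<and> cocoercive L B \<and> 2 * lam * L < 1 + alpha)"
    and "\<And>k. x (Suc (Suc k)) \<in> resolvent lam A
               (x (Suc k) - (2 * lam) *\<^sub>R B (x (Suc k)) + lam *\<^sub>R B (x k)
                + alpha *\<^sub>R (x (Suc k) - x k))"
  shows "\<exists>p \<in> zeros_sum A B. weakly_converges x p"
proof -
  obtain kap where "kap-lipschitz_on UNIV (\<lambda>u. alpha *\<^sub>R u - lam *\<^sub>R B u)"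
    and "alpha \<le> kap" and "alpha + 2 * kap < 1"
    using assms(7)
  proof (elim disjE conjE)
    assume "L-lipschitz_on UNIV B" and "2 * lam * L < 1 - 3 * alpha"
    moreover have "0 \<le> lam * L"
      using \<open>L-lipschitz_on UNIV B\<close> assms(6) by (simp add: lipschitz_on_nonneg)
    ultimately show thesis
      using assms(6) by (intro that[OF lipschitz_on_scaled_diff[OF \<open>L-lipschitz_on UNIV B\<close> assms(4)]]) auto
  next
    assume "0 < L" and "cocoercive L B" and "2 * lam * L < 1 + alpha"
    then show thesis
      using that[OF cocoercive_imp_lipschitz_on_scaled_diff] assms(4-6) by (simp add: max_def)
  qed
  then have "inertial_forward_reflected_backward A B alpha lam kap x"
    using assms by unfold_locales auto
  then show ?thesis
    by (rule inertial_forward_reflected_backward.weakly_converges_to_some_zero)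
qed

end
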